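(* Let $G$ be a finite group and let $p$ be a fixed prime divisor of $|G|$. Suppose that every maximal subgroup of $G$ is normal in $G$ or has order not divisible by $p$. Then for each prime divisor $q$ of $|G|$, $G$ is $q$-nilpotent or $q$-closed.
   Context: For a prime $q$, a finite group $G$ is $q$-nilpotent if it has a normal $q$-complement (a normal subgroup of order coprime to $q$ and index a power of $q$), and $q$-closed if its Sylow $q$-subgroup is normal in $G$. *)

theory Defs
  imports "HOL-Algebra.Algebra"
begin

definition maximal_subgroup :: "'a set \<Rightarrow> ('a, 'b) monoid_scheme \<Rightarrow> bool" where
  "maximal_subgroup M G \<longleftrightarrow> subgroup M G \<and> M \<noteq> carrier G \<and>
     (\<forall>H. subgroup H G \<and> M \<subseteq> H \<longrightarrow> H = M \<or> H = carrier G)"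

definition q_nilpotent :: "nat \<Rightarrow> ('a, 'b) monoid_scheme \<Rightarrow> bool" where
  "q_nilpotent q G \<longleftrightarrow> (\<exists>N. N \<lhd> G \<and> coprime (card N) q \<and>
     (\<exists>k. card (carrier G) = card N * q ^ k))"

definition q_closed :: "nat \<Rightarrow> ('a, 'b) monoid_scheme \<Rightarrow> bool" where
  "q_closed q G \<longleftrightarrow> (\<exists>P. subgroup P G \<and>
     card P = q ^ multiplicity q (card (carrier G)) \<and> P \<lhd> G)"

end

theory Submission
  imports Defs
begin

(*
  A Sylow p-subgroup P of G is normal: otherwise its normaliser lies in a maximal subgroup M,
  which contains P, so p divides |M| and M is normal; the Frattini argument G = M N(P) then
  gives G = M.  Replacing P by P R, for a Sylow r-subgroup R, the same argument shows that P R
  is normal, because N(R) normalises P R.  If q = p this says that G is q-closed.  Otherwise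
  every P R with r \<noteq> q is a normal subgroup of order prime to q, so the largest normal
  subgroup of order prime to q contains a Sylow r-subgroup for every prime r \<noteq> q and is a
  normal q-complement.
*)

(* The library's g <# H #> inv g, written as an image (see conjugate_eq_cosets). *)
definition conjugate :: "('a, 'b) monoid_scheme \<Rightarrow> 'a \<Rightarrow> 'a set \<Rightarrow> 'a set" where
  "conjugate G g H = (\<lambda>h. g \<otimes>\<^bsub>G\<^esub> h \<otimes>\<^bsub>G\<^esub> inv\<^bsub>G\<^esub> g) ` H"

definition sylow_subgroup :: "('a, 'b) monoid_scheme \<Rightarrow> nat \<Rightarrow> 'a set \<Rightarrow> bool" where
  "sylow_subgroup G r P \<longleftrightarrow> subgroup P G \<and> card P = r ^ multiplicity r (order G)"

lemma eq_power_multiplicity_if_prime_divisors_eq: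
  fixes m q :: nat
  assumes "m > 0" "\<And>r. Factorial_Ring.prime r \<Longrightarrow> r dvd m \<Longrightarrow> r = q"
  shows "m = q ^ multiplicity q m"
proof -
  have factors: "prime_factors m \<subseteq> {q}" using assms by (auto simp: in_prime_factors_iff)
  have m: "m = (\<Prod>r\<in>prime_factors m. r ^ multiplicity r m)"
    using prime_factorization_nat assms(1) by blast
  show ?thesis
  proof (cases "q \<in> prime_factors m")
    case True
    then have "prime_factors m = {q}" using factors by blast
    then show ?thesis using m by simp
  next
    case False
    then have "prime_factors m = {}" using factors by blast
    then show ?thesis using m by simp
  qed
qed

lemma (in group_action) exists_fixed_point_if_prime_power_order:
  assumes "finite E" "Factorial_Ring.prime r" "order G = r ^ b" "\<not> r dvd card E"
  shows "\<exists>x\<in>E. \<forall>g\<in>carrier G. \<phi> g x = x"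
proof (rule ccontr)
  assume no_fixed: "\<not> ?thesis"
  have "r dvd card orb" if orb: "orb \<in> orbits G E \<phi>" for orb
  proof -
    obtain x where x: "x \<in> E" "orb = orbit G \<phi> x" using orb unfolding orbits_def by blast
    have "card orb dvd r ^ b"
      using orbit_stabilizer_theorem[OF x(1)] x(2) assms(3) by (metis dvd_triv_left)
    then obtain j where j: "card orb = r ^ j" using assms(2) by (auto simp: divides_primepow_nat)
    have "card orb \<noteq> 1"
    proof
      assume "card orb = 1"
      then have "orb = {x}" using x orbit_refl by (metis card_1_singletonE singletonD)
      then have "\<phi> g x = x" if "g \<in> carrier G" for g
        using x that unfolding orbit_def by blast
      then show False using no_fixed x(1) by blast
    qed
    then have "j \<noteq> 0" using j by auto
    then show ?thesis using j by simp
  qed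
  moreover have "card E = (\<Sum>orb\<in>orbits G E \<phi>. card orb)"
    using disjoint_sum[OF assms(1), of "\<lambda>_. 1::nat"] by simp
  ultimately have "r dvd card E" by (simp add: dvd_sum)
  then show False using assms(4) by contradiction
qed

context group begin

lemma card_subgroup_dvd:
  assumes "subgroup H G" "subgroup K G" "H \<subseteq> K"
  shows "card H dvd card K"
proof -
  have "group (G\<lparr>carrier := K\<rparr>)" using subgroup_imp_group assms(2) by blast
  moreover have "subgroup H (G\<lparr>carrier := K\<rparr>)" using subgroup_incl assms by blast
  ultimately have "card (rcosets\<^bsub>G\<lparr>carrier := K\<rparr>\<^esub> H) * card H = order (G\<lparr>carrier := K\<rparr>)"
    by (rule group.lagrange)
  then have "card (rcosets\<^bsub>G\<lparr>carrier := K\<rparr>\<^esub> H) * card H = card K"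
    by (simp add: order_def)
  then show ?thesis by (metis dvd_triv_right)
qed

lemma card_set_mult_normal:
  assumes "N \<lhd> G" "subgroup H G"
  shows "card (N <#> H) * card (N \<inter> H) = card N * card H"
proof -
  let ?NH = "G\<lparr>carrier := N <#> H\<rparr>" and ?H = "G\<lparr>carrier := H\<rparr>"
  have "group ?NH" using subgroup_imp_group assms mult_norm_subgroup by simp
  moreover have "subgroup N ?NH"
    using normal_in_normal_set_mult[OF assms] normal_imp_subgroup by blast
  ultimately have "card (rcosets\<^bsub>?NH\<^esub> N) * card N = order ?NH" by (rule group.lagrange)
  then have NH: "card (rcosets\<^bsub>?NH\<^esub> N) * card N = card (N <#> H)" by (simp add: order_def)
  have "group ?H" using subgroup_imp_group assms by simp
  moreover have "subgroup (N \<inter> H) ?H"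
    using normal_Int_subgroup assms normal_imp_subgroup by blast
  ultimately have "card (rcosets\<^bsub>?H\<^esub> (N \<inter> H)) * card (N \<inter> H) = order ?H"
    by (rule group.lagrange)
  then have H: "card (rcosets\<^bsub>?H\<^esub> (N \<inter> H)) * card (N \<inter> H) = card H" by (simp add: order_def)
  have "?NH Mod N \<cong> ?H Mod (N \<inter> H)" using weak_snd_iso_thme assms by blast
  then have "card (rcosets\<^bsub>?NH\<^esub> N) = card (rcosets\<^bsub>?H\<^esub> (N \<inter> H))"
    by (metis iso_same_card FactGroup_def partial_object.select_convs(1))
  then show ?thesis unfolding NH[symmetric] H[symmetric] by (simp add: ac_simps)
qed

lemma coprime_card_set_mult_normal:
  assumes "N \<lhd> G" "subgroup H G" "coprime (card N) q" "coprime (card H) q"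
  shows "coprime (card (N <#> H)) q"
proof -
  have "card (N <#> H) dvd card N * card H"
    using card_set_mult_normal[OF assms(1,2)] by (metis dvd_triv_left)
  moreover have "coprime (card N * card H) q" using assms(3,4) by simp
  ultimately show ?thesis by (rule coprime_divisors[OF _ dvd_refl])
qed

lemma subset_set_mult_left: "A \<subseteq> carrier G \<Longrightarrow> \<one> \<in> B \<Longrightarrow> A \<subseteq> A <#> B"
  unfolding set_mult_def by force

lemma subset_set_mult_right: "B \<subseteq> carrier G \<Longrightarrow> \<one> \<in> A \<Longrightarrow> B \<subseteq> A <#> B"
  unfolding set_mult_def by force

lemma exists_maximal_subgroup:
  assumes "finite (carrier G)" "subgroup H G" "H \<noteq> carrier G"
  shows "\<exists>M. maximal_subgroup M G \<and> H \<subseteq> M"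
proof -
  let ?S = "{K. subgroup K G \<and> H \<subseteq> K \<and> K \<noteq> carrier G}"
  have "finite ?S"
    by (rule finite_subset[of _ "Pow (carrier G)"]) (use assms(1) subgroup.subset in auto)
  moreover have "?S \<noteq> {}" using assms(2,3) by blast
  ultimately obtain M where M: "M \<in> ?S" "\<forall>K\<in>?S. M \<subseteq> K \<longrightarrow> M = K"
    using finite_has_maximal by (metis (no_types, lifting))
  have "maximal_subgroup M G" unfolding maximal_subgroup_def
  proof (intro conjI allI impI)
    fix K assume K: "subgroup K G \<and> M \<subseteq> K"
    show "K = M \<or> K = carrier G"
    proof (cases "K = carrier G")
      case False
      then have "K \<in> ?S" using K M(1) by blast
      then show ?thesis using M(2) K by blast
    qed simp
  qed (use M(1) in auto)
  then show ?thesis using M(1) by blast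
qed

lemma conjugate_eq_cosets: "conjugate G g H = r_coset G (l_coset G g H) (inv g)"
  unfolding conjugate_def l_coset_def r_coset_def by auto

lemma normalizer_eq:
  assumes "H \<subseteq> carrier G"
  shows "normalizer G H = {g \<in> carrier G. conjugate G g H = H}"
  using assms by (simp add: normalizer_def stabilizer_def conjugate_eq_cosets)

lemma conjugate_subgroup_consistent:
  assumes "subgroup M G" "h \<in> M"
  shows "conjugate (G\<lparr>carrier := M\<rparr>) h S = conjugate G h S"
  using assms by (simp add: conjugate_def)

lemma conjugate_conjugate:
  assumes "g \<in> carrier G" "h \<in> carrier G" "H \<subseteq> carrier G"
  shows "conjugate G h (conjugate G g H) = conjugate G (h \<otimes> g) H"
  unfolding conjugate_def image_image
  using assms by (intro image_cong) (auto simp: m_assoc inv_mult_group)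

lemma conjugate_conjugate_inv:
  assumes "g \<in> carrier G" "H \<subseteq> carrier G"
  shows "conjugate G g (conjugate G (inv g) H) = H"
proof -
  have "conjugate G \<one> H = H"
    using assms unfolding conjugate_def by (auto simp: image_iff) (metis subsetD l_one r_one)+
  then show ?thesis using assms by (simp add: conjugate_conjugate)
qed

lemma conjugate_mono: "A \<subseteq> B \<Longrightarrow> conjugate G g A \<subseteq> conjugate G g B"
  unfolding conjugate_def by blast

lemma card_conjugate:
  assumes "g \<in> carrier G" "H \<subseteq> carrier G"
  shows "card (conjugate G g H) = card H"
  unfolding conjugate_def
  using assms by (intro card_image inj_onI) (metis conjugation_is_inj subsetD)

lemma subgroup_conjugate:
  assumes "g \<in> carrier G" "subgroup H G"
  shows "subgroup (conjugate G g H) G"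
  using subgroup_conjugation_is_surj2[OF assms] by (simp add: conjugate_eq_cosets)

lemma normal_iff_normalizer_eq_carrier:
  assumes "subgroup W G"
  shows "W \<lhd> G \<longleftrightarrow> normalizer G W = carrier G"
proof -
  have W: "W \<subseteq> carrier G" using assms subgroup.subset by blast
  have "W \<lhd> G \<longleftrightarrow> (\<forall>g\<in>carrier G. conjugate G g W \<subseteq> W)"
    using assms normal_inv_iff unfolding conjugate_def by auto
  also have "\<dots> \<longleftrightarrow> (\<forall>g\<in>carrier G. conjugate G g W = W)"
  proof (intro iffI ballI)
    fix g assume sub: "\<forall>g\<in>carrier G. conjugate G g W \<subseteq> W" and g: "g \<in> carrier G"
    have "W = conjugate G g (conjugate G (inv g) W)"
      using conjugate_conjugate_inv W g by simp
    also have "\<dots> \<subseteq> conjugate G g W" using sub g by (simp add: conjugate_mono)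
    finally show "conjugate G g W = W" using sub g by blast
  qed auto
  finally show ?thesis using W normalizer_eq by auto
qed

lemma normal_conjugate:
  assumes "N \<lhd> G" "g \<in> carrier G"
  shows "conjugate G g N = N"
  using assms normal_iff_normalizer_eq_carrier[of N] normalizer_eq[of N]
  by (auto dest: normal_imp_subgroup subgroup.subset)

lemma subgroup_subset_normalizer: "subgroup H G \<Longrightarrow> H \<subseteq> normalizer G H"
  using subgroup_in_normalizer normal_imp_subgroup subgroup.subset by fastforce

lemma conjugate_set_mult:
  assumes "g \<in> carrier G" "A \<subseteq> carrier G" "B \<subseteq> carrier G"
  shows "conjugate G g (A <#> B) = conjugate G g A <#> conjugate G g B"
proof -
  have "g \<otimes> (a \<otimes> b) \<otimes> inv g = (g \<otimes> a \<otimes> inv g) \<otimes> (g \<otimes> b \<otimes> inv g)"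
    if "a \<in> A" "b \<in> B" for a b
    using that assms by (simp add: m_assoc subsetD) (simp add: m_assoc[symmetric] subsetD)
  then show ?thesis
    unfolding conjugate_def set_mult_def image_UN by (simp cong: SUP_cong_simp)
qed

lemma action_on_rcosets:
  assumes "subgroup P G"
  shows "group_action G (rcosets P) (\<lambda>x. \<lambda>C\<in>rcosets P. C #> inv x)"
proof -
  let ?E = "rcosets P"
  define \<phi> where "\<phi> = (\<lambda>x. \<lambda>C\<in>?E. C #> inv x)"
  have P: "P \<subseteq> carrier G" using assms subgroup.subset by blast
  have C: "C \<subseteq> carrier G" if "C \<in> ?E" for C
    using rcosets_subset_PowG[OF assms] that by auto
  have closed: "C #> y \<in> ?E" if C: "C \<in> ?E" and y: "y \<in> carrier G" for C y
  proof -
    obtain a where a: "a \<in> carrier G" "C = P #> a" using C unfolding RCOSETS_def by blast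
    then show ?thesis using P y by (simp add: coset_mult_assoc rcosetsI)
  qed
  have bij: "\<phi> x \<in> Bij ?E" if x: "x \<in> carrier G" for x
  proof -
    have "bij_betw (\<lambda>C. C #> inv x) ?E ?E"
      by (rule bij_betwI[where g = "\<lambda>C. C #> x"]) (use closed C x in \<open>auto simp: coset_mult_assoc\<close>)
    then have "bij_betw (\<phi> x) ?E ?E"
      unfolding \<phi>_def by (rule bij_betw_cong[THEN iffD1, rotated]) auto
    then show ?thesis unfolding Bij_def \<phi>_def by simp
  qed
  have "\<phi> \<in> hom G (BijGroup ?E)"
  proof (rule homI)
    fix x assume "x \<in> carrier G"
    then show "\<phi> x \<in> carrier (BijGroup ?E)" using bij unfolding BijGroup_def by simp
  next
    fix x y assume xy: "x \<in> carrier G" "y \<in> carrier G"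
    have "\<phi> (x \<otimes> y) = compose ?E (\<phi> x) (\<phi> y)"
    proof
      fix C show "\<phi> (x \<otimes> y) C = compose ?E (\<phi> x) (\<phi> y) C"
        using xy closed C by (auto simp: \<phi>_def compose_def coset_mult_assoc inv_mult_group)
    qed
    then show "\<phi> (x \<otimes> y) = \<phi> x \<otimes>\<^bsub>BijGroup ?E\<^esub> \<phi> y"
      using bij xy unfolding BijGroup_def by simp
  qed
  then show ?thesis
    unfolding \<phi>_def group_action_def group_hom_def group_hom_axioms_def
    using group_BijGroup is_group by blast
qed

lemma sylow_subgroup_exists:
  assumes "finite (carrier G)" "Factorial_Ring.prime r"
  shows "\<exists>P. sylow_subgroup G r P"
proof -
  have "order G = r ^ multiplicity r (order G) * (order G div r ^ multiplicity r (order G))"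
    by (simp add: multiplicity_dvd)
  then show ?thesis
    unfolding sylow_subgroup_def using sylow_thm[OF assms(2) is_group _ assms(1)] by blast
qed

lemma index_not_dvd_if_contains_sylow_subgroup:
  assumes fin: "finite (carrier G)" and r: "Factorial_Ring.prime r"
    and R: "sylow_subgroup G r R" and K: "subgroup K G" "R \<subseteq> K"
  shows "\<not> r dvd card (rcosets K)"
proof
  let ?a = "multiplicity r (order G)"
  have RG: "subgroup R G" "card R = r ^ ?a" using R unfolding sylow_subgroup_def by auto
  assume "r dvd card (rcosets K)"
  moreover have "r ^ ?a dvd card K" using card_subgroup_dvd[OF RG(1) K] RG(2) by simp
  ultimately have "r * r ^ ?a dvd card (rcosets K) * card K" by (rule mult_dvd_mono)
  also have "\<dots> = order G" by (rule lagrange[OF K(1)])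
  finally have "r ^ Suc ?a dvd order G" by simp
  moreover have "order G \<noteq> 0" using fin by (simp add: order_gt_0_iff_finite)
  moreover have "\<not> is_unit r" using r not_prime_unit by blast
  ultimately have "Suc ?a \<le> ?a" by (rule multiplicity_geI[rotated 2])
  then show False by simp
qed

lemma sylow_subgroup_conjugate_subset:
  assumes fin: "finite (carrier G)" and r: "Factorial_Ring.prime r" and P: "sylow_subgroup G r P"
    and Q: "subgroup Q G" "card Q = r ^ b"
  shows "\<exists>g\<in>carrier G. conjugate G g Q \<subseteq> P"
proof -
  have PG: "subgroup P G" using P by (simp add: sylow_subgroup_def)
  interpret Q_action: group_action "G\<lparr>carrier := Q\<rparr>" "rcosets P" "\<lambda>x. \<lambda>C\<in>rcosets P. C #> inv x"
    using group_action.induced_action[OF action_on_rcosets[OF PG] Q(1)] .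
  have fin_cosets: "finite (rcosets P)"
    using rcosets_subset_PowG[OF PG] fin by (meson finite_Pow_iff finite_subset)
  have order_Q: "order (G\<lparr>carrier := Q\<rparr>) = r ^ b" using Q(2) by (simp add: order_def)
  have "\<exists>C\<in>rcosets P. \<forall>x\<in>Q. (\<lambda>C\<in>rcosets P. C #> inv x) C = C"
    using Q_action.exists_fixed_point_if_prime_power_order[OF fin_cosets r order_Q
        index_not_dvd_if_contains_sylow_subgroup[OF fin r P PG subset_refl]] by simp
  then obtain C where C: "C \<in> rcosets P" "\<forall>x\<in>Q. C #> inv x = C" by auto
  obtain g where g: "g \<in> carrier G" "C = P #> g" using C(1) unfolding RCOSETS_def by blast
  have "g \<otimes> x \<otimes> inv g \<in> P" if x: "x \<in> Q" for x
  proof -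
    have xG: "x \<in> carrier G" by (rule subgroup.mem_carrier[OF Q(1) x])
    have "C #> inv (inv x) = C" using C(2) subgroup.m_inv_closed[OF Q(1) x] by (rule bspec)
    then have "P #> g #> x = P #> g" using g(2) xG by simp
    then have "P #> (g \<otimes> x) = P #> g"
      by (simp add: coset_mult_assoc[OF subgroup.subset[OF PG] g(1) xG])
    then have "g \<otimes> x \<in> P #> g" using rcos_self[OF m_closed[OF g(1) xG] PG] by simp
    then show ?thesis by (rule subgroup.rcos_module_imp[OF PG is_group g(1)])
  qed
  then have "conjugate G g Q \<subseteq> P" unfolding conjugate_def by blast
  then show ?thesis using g(1) by blast
qed

lemma sylow_subgroups_conjugate:
  assumes "finite (carrier G)" "Factorial_Ring.prime r" "sylow_subgroup G r P" "sylow_subgroup G r Q"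
  shows "\<exists>g\<in>carrier G. conjugate G g Q = P"
proof -
  obtain g where g: "g \<in> carrier G" "conjugate G g Q \<subseteq> P"
    using sylow_subgroup_conjugate_subset[OF assms(1-3)] assms(4)
    unfolding sylow_subgroup_def by blast
  moreover have "card (conjugate G g Q) = card P"
    using card_conjugate[OF g(1) subgroup.subset] assms(3,4) by (simp add: sylow_subgroup_def)
  moreover have "finite P"
    using finite_subset[OF subgroup.subset assms(1)] assms(3) by (simp add: sylow_subgroup_def)
  ultimately show ?thesis using card_subset_eq by blast
qed

lemma sylow_subgroup_conjugate:
  assumes "g \<in> carrier G" "sylow_subgroup G r R"
  shows "sylow_subgroup G r (conjugate G g R)"
  using assms subgroup_conjugate card_conjugate[OF _ subgroup.subset]
  by (simp add: sylow_subgroup_def)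

lemma sylow_subgroup_restrict:
  assumes fin: "finite (carrier G)" and r: "Factorial_Ring.prime r"
    and R: "sylow_subgroup G r R" and M: "subgroup M G" "R \<subseteq> M"
  shows "sylow_subgroup (G\<lparr>carrier := M\<rparr>) r R"
proof -
  let ?a = "multiplicity r (order G)"
  have RG: "subgroup R G" "card R = r ^ ?a" using R by (auto simp: sylow_subgroup_def)
  have "card M dvd order G"
    using card_subgroup_dvd[OF M(1) subgroup_self subgroup.subset[OF M(1)]] by (simp add: order_def)
  moreover have "order G \<noteq> 0" using fin by (simp add: order_gt_0_iff_finite)
  ultimately have M0: "card M \<noteq> 0" and le: "multiplicity r (card M) \<le> ?a"
    by (auto intro: dvd_imp_multiplicity_le)
  have "?a \<le> multiplicity r (card M)"
  proof (rule multiplicity_geI[OF M0])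
    show "\<not> is_unit r" using r not_prime_unit by blast
    show "r ^ ?a dvd card M" using card_subgroup_dvd[OF RG(1) M] RG(2) by simp
  qed
  with le have "multiplicity r (card M) = ?a" by (rule le_antisym)
  then show ?thesis
    using subgroup_incl[OF RG(1) M] RG(2) by (simp add: sylow_subgroup_def order_def)
qed

lemma frattini_argument:
  assumes fin: "finite (carrier G)" and r: "Factorial_Ring.prime r"
    and M: "M \<lhd> G" and R: "sylow_subgroup G r R" "R \<subseteq> M"
  shows "carrier G = M <#> normalizer G R"
proof
  have MG: "subgroup M G" by (rule normal_imp_subgroup[OF M])
  have Rsub: "R \<subseteq> carrier G"
    using R(1) subgroup.subset by (auto simp: sylow_subgroup_def)
  show "carrier G \<subseteq> M <#> normalizer G R"
  proof
    fix g assume g: "g \<in> carrier G"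
    let ?R' = "conjugate G g R"
    have "?R' \<subseteq> conjugate G g M" using conjugate_mono[OF R(2)] .
    then have R'M: "?R' \<subseteq> M" using normal_conjugate[OF M g] by simp
    have "sylow_subgroup (G\<lparr>carrier := M\<rparr>) r ?R'"
      by (rule sylow_subgroup_restrict[OF fin r sylow_subgroup_conjugate[OF g R(1)] MG R'M])
    moreover have "sylow_subgroup (G\<lparr>carrier := M\<rparr>) r R"
      by (rule sylow_subgroup_restrict[OF fin r R(1) MG R(2)])
    moreover have "finite M" using finite_subset[OF subgroup.subset[OF MG] fin] .
    ultimately obtain h where h: "h \<in> M" "conjugate (G\<lparr>carrier := M\<rparr>) h ?R' = R"
      using group.sylow_subgroups_conjugate[OF subgroup_imp_group[OF MG] _ r] by fastforce
    have hG: "h \<in> carrier G" by (rule subgroup.mem_carrier[OF MG h(1)])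
    have "conjugate G (h \<otimes> g) R = R"
      using h conjugate_subgroup_consistent[OF MG h(1)] conjugate_conjugate[OF g hG Rsub] by simp
    then have "h \<otimes> g \<in> normalizer G R" using normalizer_eq[OF Rsub] hG g by simp
    moreover have "inv h \<in> M" by (rule subgroup.m_inv_closed[OF MG h(1)])
    moreover have "g = inv h \<otimes> (h \<otimes> g)" using hG g by (simp add: m_assoc[symmetric])
    ultimately show "g \<in> M <#> normalizer G R" unfolding set_mult_def by blast
  qed
  show "M <#> normalizer G R \<subseteq> carrier G"
    using set_mult_closed subgroup.subset[OF MG] normalizer_imp_subgroup[OF Rsub]
    by (simp add: subgroup.subset)
qed

lemma normal_if_contains_sylow_subgroups:
  assumes fin: "finite (carrier G)" and p: "Factorial_Ring.prime p" "p dvd order G"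
    and maximal: "\<And>M. maximal_subgroup M G \<Longrightarrow> M \<lhd> G \<or> \<not> p dvd card M"
    and P: "sylow_subgroup G p P" and r: "Factorial_Ring.prime r" and R: "sylow_subgroup G r R"
    and W: "subgroup W G" "P \<subseteq> W" "R \<subseteq> W" "normalizer G R \<subseteq> normalizer G W"
  shows "W \<lhd> G"
proof (rule ccontr)
  assume "\<not> W \<lhd> G"
  then have "normalizer G W \<noteq> carrier G" using normal_iff_normalizer_eq_carrier[OF W(1)] by blast
  then obtain M where M: "maximal_subgroup M G" "normalizer G W \<subseteq> M"
    using exists_maximal_subgroup[OF fin normalizer_imp_subgroup[OF subgroup.subset[OF W(1)]]]
    by blast
  have MG: "subgroup M G" "M \<noteq> carrier G" using M(1) by (auto simp: maximal_subgroup_def)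
  have WM: "W \<subseteq> M" using subgroup_subset_normalizer[OF W(1)] M(2) by blast
  have "order G \<noteq> 0" using fin by (simp add: order_gt_0_iff_finite)
  then have "0 < multiplicity p (order G)"
    using prime_multiplicity_gt_zero_iff[OF prime_imp_prime_elem[OF p(1)]] p(2) by blast
  then have "p dvd card P" using P by (simp add: sylow_subgroup_def dvd_power)
  also have "card P dvd card M"
    using card_subgroup_dvd[OF _ MG(1) subset_trans[OF W(2) WM]] P by (simp only: sylow_subgroup_def)
  finally have "M \<lhd> G" using maximal[OF M(1)] by blast
  then have "carrier G = M <#> normalizer G R"
    using frattini_argument[OF fin r _ R] W(3) WM by blast
  also have "\<dots> \<subseteq> M <#> M" using W(4) M(2) by (intro mono_set_mult) auto
  also have "\<dots> = M" using set_mult_subgroup_idem[OF MG(1)] subgroup_incl[OF MG(1) MG(1)] by simp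
  finally show False using MG subgroup.subset by blast
qed

lemma normal_sylow_subgroup:
  assumes fin: "finite (carrier G)" and p: "Factorial_Ring.prime p" "p dvd order G"
    and maximal: "\<And>M. maximal_subgroup M G \<Longrightarrow> M \<lhd> G \<or> \<not> p dvd card M"
    and P: "sylow_subgroup G p P"
  shows "P \<lhd> G"
  using P normal_if_contains_sylow_subgroups[OF fin p maximal P p(1) P]
  by (simp add: sylow_subgroup_def)

lemma normal_set_mult_sylow_subgroups:
  assumes fin: "finite (carrier G)" and p: "Factorial_Ring.prime p" "p dvd order G"
    and maximal: "\<And>M. maximal_subgroup M G \<Longrightarrow> M \<lhd> G \<or> \<not> p dvd card M"
    and P: "sylow_subgroup G p P" and r: "Factorial_Ring.prime r" and R: "sylow_subgroup G r R"
  shows "P <#> R \<lhd> G"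
proof (rule normal_if_contains_sylow_subgroups[OF fin p maximal P r R])
  have PN: "P \<lhd> G" by (rule normal_sylow_subgroup[OF fin p maximal P])
  have PG: "subgroup P G" and RG: "subgroup R G"
    using P R by (auto simp: sylow_subgroup_def)
  have Psub: "P \<subseteq> carrier G" and Rsub: "R \<subseteq> carrier G"
    using PG RG subgroup.subset by auto
  show "subgroup (P <#> R) G" by (rule mult_norm_subgroup[OF PN RG])
  show "P \<subseteq> P <#> R" by (rule subset_set_mult_left[OF Psub subgroup.one_closed[OF RG]])
  show "R \<subseteq> P <#> R" by (rule subset_set_mult_right[OF Rsub subgroup.one_closed[OF PG]])
  show "normalizer G R \<subseteq> normalizer G (P <#> R)"
  proof
    fix g assume "g \<in> normalizer G R"
    then have g: "g \<in> carrier G" "conjugate G g R = R" using normalizer_eq[OF Rsub] by auto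
    then have "conjugate G g (P <#> R) = P <#> R"
      using conjugate_set_mult[OF g(1) Psub Rsub] normal_conjugate[OF PN g(1)] by simp
    then show "g \<in> normalizer G (P <#> R)"
      using normalizer_eq[OF set_mult_closed[OF Psub Rsub]] g(1) by simp
  qed
qed

lemma exists_largest_normal_coprime_subgroup:
  fixes q :: nat
  assumes fin: "finite (carrier G)"
  shows "\<exists>K. K \<lhd> G \<and> coprime (card K) q \<and> (\<forall>L. L \<lhd> G \<and> coprime (card L) q \<longrightarrow> L \<subseteq> K)"
proof -
  let ?F = "{N. N \<lhd> G \<and> coprime (card N) q}"
  have "?F \<subseteq> Pow (carrier G)" using normal_imp_subgroup subgroup.subset by blast
  then have "finite ?F" using fin by (meson finite_Pow_iff finite_subset)
  moreover have "{\<one>} \<in> ?F" using one_is_normal by simp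
  ultimately obtain K where K: "K \<in> ?F" "\<forall>L\<in>?F. K \<subseteq> L \<longrightarrow> K = L"
    using finite_has_maximal by (metis (no_types, lifting) empty_iff)
  have KG: "K \<lhd> G" "subgroup K G" using K(1) normal_imp_subgroup by auto
  have "L \<subseteq> K" if L: "L \<lhd> G" "coprime (card L) q" for L
  proof -
    have LG: "subgroup L G" by (rule normal_imp_subgroup[OF L(1)])
    have "coprime (card (K <#> L)) q"
      using coprime_card_set_mult_normal[OF KG(1) LG] K(1) L(2) by simp
    moreover have "K <#> L \<lhd> G" by (rule normal_subgroup_set_mult_closed[OF KG(1) L(1)])
    moreover have "K \<subseteq> K <#> L"
      by (rule subset_set_mult_left[OF subgroup.subset[OF KG(2)] subgroup.one_closed[OF LG]])
    ultimately have "K = K <#> L" using K(2) by blast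
    then show ?thesis
      using subset_set_mult_right[OF subgroup.subset[OF LG] subgroup.one_closed[OF KG(2)]] by simp
  qed
  then show ?thesis using K(1) by blast
qed

lemma q_nilpotent_if_sylow_subgroups_in_normal_coprime:
  assumes fin: "finite (carrier G)" and q: "Factorial_Ring.prime q"
    and sylow: "\<And>r R. Factorial_Ring.prime r \<Longrightarrow> r \<noteq> q \<Longrightarrow> sylow_subgroup G r R \<Longrightarrow>
      \<exists>N. N \<lhd> G \<and> coprime (card N) q \<and> R \<subseteq> N"
  shows "q_nilpotent q G"
proof -
  obtain K where K: "K \<lhd> G" "coprime (card K) q"
    and largest: "\<forall>L. L \<lhd> G \<and> coprime (card L) q \<longrightarrow> L \<subseteq> K"
    using exists_largest_normal_coprime_subgroup[OF fin, of q] by (elim exE conjE)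
  have KG: "subgroup K G" by (rule normal_imp_subgroup[OF K(1)])
  have index: "card (rcosets K) * card K = order G" by (rule lagrange[OF KG])
  have "r = q" if r: "Factorial_Ring.prime r" "r dvd card (rcosets K)" for r
  proof (rule ccontr)
    assume "r \<noteq> q"
    obtain R where R: "sylow_subgroup G r R" using sylow_subgroup_exists[OF fin r(1)] by (elim exE)
    obtain N where N: "N \<lhd> G" "coprime (card N) q" "R \<subseteq> N"
      using sylow[OF r(1) \<open>r \<noteq> q\<close> R] by (elim exE conjE)
    have "N \<subseteq> K" using largest N(1,2) by simp
    then have "\<not> r dvd card (rcosets K)"
      using index_not_dvd_if_contains_sylow_subgroup[OF fin r(1) R KG] N(3) by simp
    then show False using r(2) by contradiction
  qed
  moreover have "card (rcosets K) > 0"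
    using index fin order_gt_0_iff_finite by (metis gr0I mult_0)
  ultimately have "card (rcosets K) = q ^ multiplicity q (card (rcosets K))"
    by (intro eq_power_multiplicity_if_prime_divisors_eq)
  then have "card (carrier G) = card K * q ^ multiplicity q (card (rcosets K))"
    using index unfolding order_def by (simp add: mult.commute)
  then show ?thesis unfolding q_nilpotent_def using K(1,2) by blast
qed

lemma q_nilpotent_or_q_closed:
  assumes fin: "finite (carrier G)" and p: "Factorial_Ring.prime p" "p dvd order G"
    and maximal: "\<And>M. maximal_subgroup M G \<Longrightarrow> M \<lhd> G \<or> \<not> p dvd card M"
    and q: "Factorial_Ring.prime q"
  shows "q_nilpotent q G \<or> q_closed q G"
proof -
  obtain P where P: "sylow_subgroup G p P" using sylow_subgroup_exists[OF fin p(1)] by blast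
  have PN: "P \<lhd> G" by (rule normal_sylow_subgroup[OF fin p maximal P])
  show ?thesis
  proof (cases "q = p")
    case True
    then have "q_closed q G" using P PN by (auto simp: q_closed_def sylow_subgroup_def order_def)
    then show ?thesis ..
  next
    case False
    have coprime_sylow: "coprime (card R) q"
      if "Factorial_Ring.prime r" "r \<noteq> q" "sylow_subgroup G r R" for r R
      using that primes_coprime[OF that(1) q] by (simp add: sylow_subgroup_def)
    have "q_nilpotent q G"
    proof (rule q_nilpotent_if_sylow_subgroups_in_normal_coprime[OF fin q])
      fix r R assume r: "Factorial_Ring.prime r" "r \<noteq> q" and R: "sylow_subgroup G r R"
      have RG: "subgroup R G" using R by (simp add: sylow_subgroup_def)
      have "P <#> R \<lhd> G" by (rule normal_set_mult_sylow_subgroups[OF fin p maximal P r(1) R])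
      moreover have "coprime (card (P <#> R)) q"
        using coprime_card_set_mult_normal[OF PN RG] coprime_sylow[OF p(1) _ P]
          coprime_sylow[OF r R] False by simp
      moreover have "R \<subseteq> P <#> R"
        using subset_set_mult_right[OF subgroup.subset[OF RG] subgroup.one_closed] PN
        by (simp add: normal_imp_subgroup)
      ultimately show "\<exists>N. N \<lhd> G \<and> coprime (card N) q \<and> R \<subseteq> N" by blast
    qed
    then show ?thesis ..
  qed
qed

end

theorem theorem1p10:
  fixes G :: "('a, 'b) monoid_scheme" and p :: nat
  assumes "group G" and "finite (carrier G)"
    and "Factorial_Ring.prime p" and "p dvd order G"
    and "\<And>M. maximal_subgroup M G \<Longrightarrow> M \<lhd> G \<or> \<not> p dvd card M"
  shows "\<forall>q. Factorial_Ring.prime q \<and> q dvd order G \<longrightarrow> q_nilpotent q G \<or> q_closed q G"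
  using group.q_nilpotent_or_q_closed[OF assms] by blast

end
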